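(* Let $0<k<n$ be integers with $n-2k+2\ge 0$. Then there exists a $k$-splitting of $Q_2^n$ that contains at most two $(n-k)$-faces of any fixed direction.
   Context: $Q_2^n=\{0,1\}^n$. For $0\le m\le n$, an $m$-face of $Q_2^n$ is given by a tuple $a=(a_1,\dots,a_n)\in\{0,1,*\}^n$ with exactly $m$ entries equal to $*$; it denotes the set $\{x\in Q_2^n : x_i=a_i \text{ whenever } a_i\in\{0,1\}\}$. The direction of a face is the set of positions of its asterisks. A $k$-splitting of $Q_2^n$ is a collection of exactly $2^k$ $(n-k)$-faces whose union is $Q_2^n$ (equivalently, a partition of $Q_2^n$ into $(n-k)$-faces). *)

theory Defs
  imports Main
begin

datatype sym = Zero | One | Star

text \<open>The cube Q_2^n: bool lists of length n (False = 0, True = 1).\<close>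
definition cube :: "nat \<Rightarrow> bool list set" where
  "cube n = {x. length x = n}"

definition sym_of_bool :: "bool \<Rightarrow> sym" where
  "sym_of_bool b = (if b then One else Zero)"

definition face_set :: "sym list \<Rightarrow> bool list set" where
  "face_set a = {x. length x = length a \<and>
     (\<forall>i < length a. a ! i \<noteq> Star \<longrightarrow> sym_of_bool (x ! i) = a ! i)}"

definition direction :: "sym list \<Rightarrow> nat set" where
  "direction a = {i. i < length a \<and> a ! i = Star}"

definition is_face :: "nat \<Rightarrow> nat \<Rightarrow> sym list \<Rightarrow> bool" where
  "is_face n m a \<longleftrightarrow> length a = n \<and> card (direction a) = m"

definition k_splitting :: "nat \<Rightarrow> nat \<Rightarrow> sym list set \<Rightarrow> bool" where
  "k_splitting n k F \<longleftrightarrow> finite F \<and> card F = 2 ^ k \<and>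
     (\<forall>a \<in> F. is_face n (n - k) a) \<and> (\<Union>a \<in> F. face_set a) = cube n"

end

theory Submission
  imports Defs
begin

text \<open>Induction on k in steps of two dimensions. Given a k-splitting F of Q_2^n with at most
  two faces per direction, prefix every face f by the two parallel edges of the square Q_2^2 of
  one of its two directions; this gives a (k+1)-splitting of Q_2^(n+2). If the two faces of F
  sharing a direction get edges of different directions, the only new faces of equal direction
  are the two edges over the same face. The induction starts from the two halves of
  Q_2^(n-2k+2) (k = 1) or, when n = 2k - 2, from an explicit 3-splitting of Q_2^4.\<close>

definition at_most_two_per_direction :: "sym list set \<Rightarrow> bool" where
  "at_most_two_per_direction F \<longleftrightarrow> (\<forall>D. card {a \<in> F. direction a = D} \<le> 2)"

lemma sym_of_bool_eq_iff [simp]: "sym_of_bool a = sym_of_bool b \<longleftrightarrow> a = b"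
  by (simp add: sym_of_bool_def)

lemma sym_of_bool_neq_Star [simp]: "sym_of_bool b \<noteq> Star"
  by (simp add: sym_of_bool_def)

lemma mem_face_set_iff:
  "x \<in> face_set a \<longleftrightarrow> list_all2 (\<lambda>b s. s \<noteq> Star \<longrightarrow> sym_of_bool b = s) x a"
  by (auto simp: face_set_def list_all2_conv_all_nth)

lemma length_of_mem_face_set: "x \<in> face_set a \<Longrightarrow> length x = length a"
  by (simp add: face_set_def)

lemma finite_direction [simp]: "finite (direction a)"
  by (simp add: direction_def)

lemma Cons_mem_face_set_Cons_iff [simp]:
  "b # y \<in> face_set (s # a) \<longleftrightarrow> (s \<noteq> Star \<longrightarrow> sym_of_bool b = s) \<and> y \<in> face_set a"
  by (simp add: mem_face_set_iff)

lemma mem_face_set_replicate_Star [simp]: "y \<in> face_set (replicate m Star) \<longleftrightarrow> length y = m"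
  by (auto simp: mem_face_set_iff list_all2_conv_all_nth)

lemma append_mem_face_set_append_iff:
  assumes "length y = length p"
  shows "y @ z \<in> face_set (p @ f) \<longleftrightarrow> y \<in> face_set p \<and> z \<in> face_set f"
  using assms by (simp add: mem_face_set_iff list_all2_append)

lemma direction_Nil [simp]: "direction [] = {}"
  by (simp add: direction_def)

lemma direction_Cons [simp]:
  "direction (s # a) = (if s = Star then insert 0 (Suc ` direction a) else Suc ` direction a)"
proof (rule set_eqI)
  fix i
  show "i \<in> direction (s # a) \<longleftrightarrow>
      i \<in> (if s = Star then insert 0 (Suc ` direction a) else Suc ` direction a)"
    by (cases i) (auto simp: direction_def)
qed

lemma direction_append:
  "direction (p @ f) = direction p \<union> (\<lambda>i. i + length p) ` direction f"
proof (rule set_eqI)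
  fix i
  show "i \<in> direction (p @ f) \<longleftrightarrow> i \<in> direction p \<union> (\<lambda>i. i + length p) ` direction f"
    by (cases "i < length p")
      (auto simp: direction_def nth_append image_iff intro: exI[of _ "i - length p"])
qed

lemma splitting_into_halves:
  assumes "1 \<le> m"
  shows "k_splitting m 1 {Zero # replicate (m - 1) Star, One # replicate (m - 1) Star}"
    (is "k_splitting m 1 ?F")
proof -
  have "direction (replicate (m - 1) Star) = {0..<m - 1}"
    by (auto simp: direction_def)
  then have faces: "\<forall>a\<in>?F. is_face m (m - 1) a"
    using assms by (simp add: is_face_def card_image)
  have "x \<in> (\<Union>a\<in>?F. face_set a)" if "x \<in> cube m" for x
  proof -
    from that assms obtain b y where "x = b # y" "length y = m - 1"
      by (cases x) (auto simp: cube_def)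
    then show ?thesis
      by (cases b) (simp_all add: sym_of_bool_def)
  qed
  moreover have "(\<Union>a\<in>?F. face_set a) \<subseteq> cube m"
    using faces by (auto simp: cube_def is_face_def dest: length_of_mem_face_set)
  ultimately show ?thesis
    using faces by (auto simp: k_splitting_def)
qed

lemma at_most_two_per_direction_if_card_le_2:
  assumes "finite F" "card F \<le> 2"
  shows "at_most_two_per_direction F"
  unfolding at_most_two_per_direction_def
proof
  fix D
  have "card {a \<in> F. direction a = D} \<le> card F"
    using assms(1) by (rule card_mono) auto
  with assms(2) show "card {a \<in> F. direction a = D} \<le> 2" by simp
qed

lemma exists_sparse_1_splitting:
  assumes "1 \<le> m"
  shows "\<exists>F. k_splitting m 1 F \<and> at_most_two_per_direction F"
proof -
  let ?H = "{Zero # replicate (m - 1) Star, One # replicate (m - 1) Star}"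
  have "k_splitting m 1 ?H"
    using assms by (rule splitting_into_halves)
  moreover have "at_most_two_per_direction ?H"
    by (rule at_most_two_per_direction_if_card_le_2)
      (use calculation in \<open>simp_all add: k_splitting_def\<close>)
  ultimately show ?thesis by blast
qed

definition splitting_4_3 :: "sym list list" where
  "splitting_4_3 =
     [[Star,Zero,Zero,Zero], [Star,Zero,Zero,One], [Zero,Star,One,Zero], [Zero,Star,One,One],
      [Zero,One,Zero,Star], [One,Zero,One,Star], [One,One,Star,Zero], [One,One,Star,One]]"

lemma map_direction_splitting_4_3:
  "map direction splitting_4_3 = [{0}, {0}, {1}, {1}, {3}, {3}, {2}, {2}]"
  by (simp add: splitting_4_3_def)

lemma k_splitting_4_3: "k_splitting 4 3 (set splitting_4_3)"
proof -
  have "\<forall>a \<in> set splitting_4_3. is_face 4 (4 - 3) a"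
    using map_direction_splitting_4_3 by (auto simp: splitting_4_3_def is_face_def)
  moreover have "card (set splitting_4_3) = 2 ^ 3"
    by (simp add: splitting_4_3_def)
  moreover have "x \<in> (\<Union>a \<in> set splitting_4_3. face_set a)" if "x \<in> cube 4" for x
  proof -
    from that obtain x0 x1 x2 x3 where "x = [x0, x1, x2, x3]"
      by (auto simp: cube_def length_Suc_conv numeral_eq_Suc)
    then show ?thesis
      by (cases x0; cases x1; cases x2; cases x3)
        (simp_all add: splitting_4_3_def mem_face_set_iff sym_of_bool_def)
  qed
  moreover have "(\<Union>a \<in> set splitting_4_3. face_set a) \<subseteq> cube 4"
    by (auto simp: splitting_4_3_def cube_def dest: length_of_mem_face_set)
  ultimately show ?thesis
    by (auto simp: k_splitting_def)
qed

lemma at_most_two_per_direction_4_3: "at_most_two_per_direction (set splitting_4_3)"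
  unfolding at_most_two_per_direction_def
proof
  fix D
  have "card {a \<in> set splitting_4_3. direction a = D}
      \<le> length (filter (\<lambda>d. d = D) (map direction splitting_4_3))"
    using card_length[of "filter (\<lambda>a. direction a = D) splitting_4_3"]
    by (simp add: filter_map comp_def)
  also note map_direction_splitting_4_3
  also have "length (filter (\<lambda>d. d = D) [{0},{0},{1},{1},{3},{3},{2},{2}]) \<le> (2::nat)"
    by (cases "D = {0}"; cases "D = {1}"; cases "D = {2}"; cases "D = {3}") auto
  finally show "card {a \<in> set splitting_4_3. direction a = D} \<le> 2" .
qed

text \<open>For fixed c, the edges square_edge c False and square_edge c True are parallel and
  together cover the square Q_2^2.\<close>

definition square_edge :: "bool \<Rightarrow> bool \<Rightarrow> sym list" where
  "square_edge c b = (if c then [Star, sym_of_bool b] else [sym_of_bool b, Star])"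

definition extend_by_edges :: "(sym list \<Rightarrow> bool) \<Rightarrow> sym list set \<Rightarrow> sym list set" where
  "extend_by_edges c F = (\<lambda>(b, f). square_edge (c f) b @ f) ` (UNIV \<times> F)"

lemma length_square_edge [simp]: "length (square_edge c b) = 2"
  by (simp add: square_edge_def)

lemma direction_square_edge [simp]: "direction (square_edge c b) = {if c then 0 else 1}"
  by (auto simp: square_edge_def direction_def less_Suc_eq numeral_2_eq_2)

lemma mem_face_set_square_edge_iff:
  "[x0, x1] \<in> face_set (square_edge c b) \<longleftrightarrow> (if c then x1 = b else x0 = b)"
  by (simp add: square_edge_def mem_face_set_iff)

lemma square_edge_eq_iff [simp]: "square_edge c b = square_edge c' b' \<longleftrightarrow> c = c' \<and> b = b'"
  by (auto simp: square_edge_def split: if_splits)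

lemma direction_square_edge_append:
  "direction (square_edge c b @ f) = insert (if c then 0 else 1) ((\<lambda>i. i + 2) ` direction f)"
  by (simp add: direction_append)

lemma k_splitting_extend_by_edges:
  assumes F: "k_splitting n k F" and "k \<le> n"
  shows "k_splitting (n + 2) (k + 1) (extend_by_edges c F)"
proof -
  let ?h = "\<lambda>(b, f). square_edge (c f) b @ f"
  from F have fin: "finite F" and card_F: "card F = 2 ^ k"
    and faces_F: "\<forall>f\<in>F. is_face n (n - k) f" and cover_F: "(\<Union>f\<in>F. face_set f) = cube n"
    by (auto simp: k_splitting_def)
  have "inj_on ?h (UNIV \<times> F)"
  proof (rule inj_onI, clarify)
    fix b f b' f'
    assume eq: "square_edge (c f) b @ f = square_edge (c f') b' @ f'"
    then have "f = f'"
      using arg_cong[OF eq, of "drop 2"] by simp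
    with eq show "b = b' \<and> f = f'" by simp
  qed
  then have card: "card (extend_by_edges c F) = 2 ^ (k + 1)"
    by (simp add: extend_by_edges_def card_image card_cartesian_product card_F)
  have faces: "\<forall>a\<in>extend_by_edges c F. is_face (n + 2) (n + 2 - (k + 1)) a"
  proof
    fix a assume "a \<in> extend_by_edges c F"
    then obtain b f where a: "a = square_edge (c f) b @ f" and "f \<in> F"
      by (auto simp: extend_by_edges_def)
    with faces_F have "length f = n" "card (direction f) = n - k"
      by (auto simp: is_face_def)
    moreover have "card ((\<lambda>i. i + 2) ` direction f) = card (direction f)"
      by (simp add: card_image inj_on_def)
    ultimately show "is_face (n + 2) (n + 2 - (k + 1)) a"
      using \<open>k \<le> n\<close> by (auto simp: is_face_def a direction_square_edge_append card_insert_if)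
  qed
  have "x \<in> (\<Union>a\<in>extend_by_edges c F. face_set a)" if "x \<in> cube (n + 2)" for x
  proof -
    from that obtain x0 x1 y where x: "x = [x0, x1] @ y" and "length y = n"
      by (auto simp: cube_def length_Suc_conv numeral_2_eq_2)
    with cover_F obtain f where "f \<in> F" "y \<in> face_set f"
      by (auto simp: cube_def)
    moreover define b where "b = (if c f then x1 else x0)"
    then have "[x0, x1] \<in> face_set (square_edge (c f) b)"
      by (simp add: mem_face_set_square_edge_iff)
    ultimately have "x \<in> face_set (square_edge (c f) b @ f)"
      unfolding x by (subst append_mem_face_set_append_iff) simp_all
    moreover have "square_edge (c f) b @ f \<in> extend_by_edges c F"
      using \<open>f \<in> F\<close> unfolding extend_by_edges_def
      by (intro image_eqI[of _ _ "(b, f)"]) auto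
    ultimately show ?thesis by blast
  qed
  moreover have "(\<Union>a\<in>extend_by_edges c F. face_set a) \<subseteq> cube (n + 2)"
    using faces by (auto simp: cube_def is_face_def dest: length_of_mem_face_set)
  ultimately show ?thesis
    using fin card faces by (auto simp: k_splitting_def extend_by_edges_def)
qed

definition separates_directions :: "(sym list \<Rightarrow> bool) \<Rightarrow> sym list set \<Rightarrow> bool" where
  "separates_directions c F \<longleftrightarrow>
     (\<forall>f\<in>F. \<forall>g\<in>F. direction f = direction g \<longrightarrow> c f = c g \<longrightarrow> f = g)"

lemma at_most_two_per_direction_extend_by_edges:
  assumes "finite F" and "separates_directions c F"
  shows "at_most_two_per_direction (extend_by_edges c F)"
  unfolding at_most_two_per_direction_def
proof
  fix D
  let ?h = "\<lambda>(b, f). square_edge (c f) b @ f"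
  let ?S = "{f \<in> F. direction f = {i. i + 2 \<in> D} \<and> c f = (0 \<in> D)}"
  have "{a \<in> extend_by_edges c F. direction a = D} \<subseteq> ?h ` (UNIV \<times> ?S)"
  proof
    fix a assume "a \<in> {a \<in> extend_by_edges c F. direction a = D}"
    then obtain b f where a: "a = square_edge (c f) b @ f" and "f \<in> F"
      and "D = insert (if c f then 0 else 1) ((\<lambda>i. i + 2) ` direction f)"
      by (auto simp: extend_by_edges_def direction_square_edge_append)
    then have "f \<in> ?S" by auto
    then show "a \<in> ?h ` (UNIV \<times> ?S)"
      unfolding a by (intro image_eqI[of _ _ "(b, f)"]) auto
  qed
  then have "card {a \<in> extend_by_edges c F. direction a = D} \<le> card (?h ` (UNIV \<times> ?S))"
    using \<open>finite F\<close> by (intro card_mono) auto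
  also have "\<dots> \<le> card ((UNIV :: bool set) \<times> ?S)"
    using \<open>finite F\<close> by (intro card_image_le) auto
  also have "\<dots> = 2 * card ?S"
    by (simp add: card_cartesian_product)
  also have "card ?S \<le> 1"
    using assms by (auto simp: card_le_Suc0_iff_eq separates_directions_def)
  finally show "card {a \<in> extend_by_edges c F. direction a = D} \<le> 2"
    by simp
qed

text \<open>Mark one face of each direction (the SOME-chosen one) with False, all others with True;
  with at most two faces per direction, faces of equal direction then get different marks.\<close>

lemma exists_direction_separating_marking:
  assumes "finite F" and "at_most_two_per_direction F"
  shows "\<exists>c. separates_directions c F"
proof -
  define rep where "rep D = (SOME g. g \<in> F \<and> direction g = D)" for D
  have rep: "rep (direction f) \<in> F \<and> direction (rep (direction f)) = direction f"
    if "f \<in> F" for f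
    unfolding rep_def by (rule someI[where P = "\<lambda>g. g \<in> F \<and> direction g = direction f"])
      (use that in simp)
  have both_unmarked: "f = g"
    if "f \<in> F" "g \<in> F" "direction f = direction g" "f \<noteq> rep (direction f)"
      "g \<noteq> rep (direction g)" for f g
  proof (rule ccontr)
    assume "f \<noteq> g"
    with that have "card {f, g, rep (direction f)} = 3" by auto
    moreover have "card {f, g, rep (direction f)} \<le> card {a \<in> F. direction a = direction f}"
      using assms(1) that rep by (intro card_mono) auto
    moreover have "card {a \<in> F. direction a = direction f} \<le> 2"
      using assms(2) by (simp add: at_most_two_per_direction_def)
    ultimately show False by simp
  qed
  show ?thesis
  proof (rule exI[where x = "\<lambda>f. f \<noteq> rep (direction f)"],
      unfold separates_directions_def, intro ballI impI)
    fix f g assume "f \<in> F" "g \<in> F" "direction f = direction g"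
      and "(f \<noteq> rep (direction f)) = (g \<noteq> rep (direction g))"
    then show "f = g"
      using both_unmarked by (cases "f = rep (direction f)") auto
  qed
qed

lemma sparse_splitting_step:
  assumes "k_splitting n k F" "at_most_two_per_direction F" "k \<le> n"
  shows "\<exists>G. k_splitting (n + 2) (k + 1) G \<and> at_most_two_per_direction G"
proof -
  have "finite F" using assms(1) by (simp add: k_splitting_def)
  obtain c where "separates_directions c F"
    using exists_direction_separating_marking[OF \<open>finite F\<close> assms(2)] ..
  have "k_splitting (n + 2) (k + 1) (extend_by_edges c F)"
    using assms(1,3) by (rule k_splitting_extend_by_edges)
  moreover have "at_most_two_per_direction (extend_by_edges c F)"
    using \<open>finite F\<close> \<open>separates_directions c F\<close>
    by (rule at_most_two_per_direction_extend_by_edges)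
  ultimately show ?thesis by blast
qed

lemma sparse_splitting_iterate:
  assumes "k_splitting n k F" "at_most_two_per_direction F" "k \<le> n"
  shows "\<exists>G. k_splitting (n + 2 * i) (k + i) G \<and> at_most_two_per_direction G"
proof (induction i)
  case 0
  then show ?case using assms by auto
next
  case (Suc i)
  then obtain G where "k_splitting (n + 2 * i) (k + i) G" "at_most_two_per_direction G"
    by blast
  from sparse_splitting_step[OF this] \<open>k \<le> n\<close> show ?case
    by (simp add: algebra_simps)
qed

theorem proposition6:
  fixes n k :: nat
  assumes "0 < k" and "k < n" and "2 * k \<le> n + 2"
  shows "\<exists>F. k_splitting n k F \<and>
           (\<forall>D. card {a \<in> F. direction a = D} \<le> 2)"
proof -
  have "\<exists>F. k_splitting n k F \<and> at_most_two_per_direction F"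
  proof (cases "2 * k \<le> n + 1")
    case True
    define m where "m = n + 2 - 2 * k"
    have "1 \<le> m" and dims: "m + 2 * (k - 1) = n" "1 + (k - 1) = k"
      using True assms by (auto simp: m_def)
    then obtain F where "k_splitting m 1 F" "at_most_two_per_direction F"
      using exists_sparse_1_splitting by blast
    from sparse_splitting_iterate[OF this \<open>1 \<le> m\<close>, of "k - 1"] show ?thesis
      unfolding dims .
  next
    case False
    then have dims: "4 + 2 * (k - 3) = n" "3 + (k - 3) = k"
      using assms by auto
    from sparse_splitting_iterate[OF k_splitting_4_3 at_most_two_per_direction_4_3, of "k - 3"]
    show ?thesis
      unfolding dims by simp
  qed
  then show ?thesis
    by (simp add: at_most_two_per_direction_def)
qed

end
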